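(* Let $N_1\in\mathbb{N}$ and $N_2\in\mathbb{N}$ with $N_2\ge1$. Define $\mathbb{D}_1=[0:N_1-1]$, $\mathbb{D}_2=\{k(N_1+1): k\in[0:N_2-1]\}$, the nested array $\mathbb{D}_{\mathrm{NA}}=\mathbb{D}_1\cup(\mathbb{D}_2+N_1)$, and the symmetric array $\mathbb{S}(\mathbb{D}_{\mathrm{NA}},\ell)=\mathbb{D}_{\mathrm{NA}}\cup(\max\mathbb{D}_{\mathrm{NA}}-\mathbb{D}_{\mathrm{NA}}+\ell)$. Then, with $\ell=N_1$, $$\mathbb{S}(\mathbb{D}_{\mathrm{NA}},N_1)=\mathbb{D}_1\cup(\mathbb{D}_2+N_1)\cup(\mathbb{D}_1+(N_1+1)N_2)\triangleq\mathbb{D}_{\mathrm{CNA}}(N_1,N_2),$$ this set has exactly $2N_1+N_2$ elements, and its sum set is contiguous: $\mathbb{D}_{\mathrm{CNA}}+\mathbb{D}_{\mathrm{CNA}}=[0:2\max\mathbb{D}_{\mathrm{CNA}}]$, where $\max\mathbb{D}_{\mathrm{CNA}}=(N_1+1)N_2+N_1-1$. Moreover its difference set is also contiguous: $\mathbb{D}_{\mathrm{CNA}}-\mathbb{D}_{\mathrm{CNA}}=[-\max\mathbb{D}_{\mathrm{CNA}}:\max\mathbb{D}_{\mathrm{CNA}}]$.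
   Context: For finite sets $\mathbb{A},\mathbb{B}\subset\mathbb{Z}$ and $c\in\mathbb{Z}$: $\mathbb{A}+\mathbb{B}=\{a+b\}$, $\mathbb{A}-\mathbb{B}=\{a-b\}$, $c-\mathbb{A}=\{c-a\}$, $\mathbb{A}+c=\{a+c\}$; $[a:b]=\{c\in\mathbb{Z}: a\le c\le b\}$ (empty if $b<a$); $\mathbb{N}$ includes $0$. *)

theory Defs
  imports Main
begin

definition sumset :: "int set \<Rightarrow> int set \<Rightarrow> int set" where
  "sumset A B = {a + b | a b. a \<in> A \<and> b \<in> B}"

definition diffset :: "int set \<Rightarrow> int set \<Rightarrow> int set" where
  "diffset A B = {a - b | a b. a \<in> A \<and> b \<in> B}"

definition shift :: "int set \<Rightarrow> int \<Rightarrow> int set" where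
  "shift A c = (\<lambda>a. a + c) ` A"

definition reflect :: "int \<Rightarrow> int set \<Rightarrow> int set" where
  "reflect c A = (\<lambda>a. c - a) ` A"

definition D1 :: "nat \<Rightarrow> int set" where
  "D1 N1 = {0 .. int N1 - 1}"

definition D2 :: "nat \<Rightarrow> nat \<Rightarrow> int set" where
  "D2 N1 N2 = {k * (int N1 + 1) | k :: int. k \<in> {0 .. int N2 - 1}}"

definition DNA :: "nat \<Rightarrow> nat \<Rightarrow> int set" where
  "DNA N1 N2 = D1 N1 \<union> shift (D2 N1 N2) (int N1)"

definition symarr :: "int set \<Rightarrow> int \<Rightarrow> int set" where
  "symarr D l = D \<union> shift (reflect (Max D) D) l"

definition DCNA :: "nat \<Rightarrow> nat \<Rightarrow> int set" where
  "DCNA N1 N2 = D1 N1 \<union> shift (D2 N1 N2) (int N1)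
      \<union> shift (D1 N1) ((int N1 + 1) * int N2)"

end

theory Submission
  imports Defs
begin

(* The symmetric array S(D, l) is invariant under x \<mapsto> m - x for m = max D + l, which is its
   maximum when min D = 0. For a set A with this symmetry every sum a + b equals (a - (m - b)) + m,
   so A + A = (A - A) + m and it suffices that the difference set is contiguous. For the coprime
   nested array this holds because the nested part D1 \<union> (D2 + N1) alone realises every difference
   below (N1 + 1) N2, while the reflected block D1 + (N1 + 1) N2 supplies the remaining ones as
   differences with 0. *)

lemma mem_shift_iff: "x \<in> shift A c \<longleftrightarrow> x - c \<in> A"
  unfolding shift_def by force

lemma mem_reflect_iff: "x \<in> reflect c A \<longleftrightarrow> c - x \<in> A"
  unfolding reflect_def by force

lemma finite_shift: "finite A \<Longrightarrow> finite (shift A c)"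
  unfolding shift_def by simp

lemma card_shift: "card (shift A c) = card A"
  unfolding shift_def by (simp add: card_image)

lemma shift_atLeastAtMost: "shift {a..b} c = {a + c..b + c}"
  by (auto simp: mem_shift_iff)

lemma reflect_Un: "reflect c (A \<union> B) = reflect c A \<union> reflect c B"
  by (simp add: reflect_def image_Un)

lemma shift_Un: "shift (A \<union> B) c = shift A c \<union> shift B c"
  by (simp add: shift_def image_Un)

lemma ex_reverse_index_iff:
  fixes n :: int
  shows "(\<exists>k. 0 \<le> k \<and> k < n \<and> P (n - 1 - k)) \<longleftrightarrow> (\<exists>k. 0 \<le> k \<and> k < n \<and> P k)"
proof
  assume "\<exists>k. 0 \<le> k \<and> k < n \<and> P (n - 1 - k)"
  then obtain k where "0 \<le> k" "k < n" "P (n - 1 - k)" by blast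
  then show "\<exists>k. 0 \<le> k \<and> k < n \<and> P k" by (intro exI[of _ "n - 1 - k"]) simp
next
  assume "\<exists>k. 0 \<le> k \<and> k < n \<and> P k"
  then obtain k where "0 \<le> k" "k < n" "P k" by blast
  then show "\<exists>k. 0 \<le> k \<and> k < n \<and> P (n - 1 - k)" by (intro exI[of _ "n - 1 - k"]) simp
qed

lemma finite_symarr: "finite D \<Longrightarrow> finite (symarr D l)"
  unfolding symarr_def shift_def reflect_def by simp

lemma reflect_symarr: "reflect (Max D + l) (symarr D l) = symarr D l"
  by (auto simp: symarr_def mem_reflect_iff mem_shift_iff algebra_simps)

lemma symarr_subset_atLeastAtMost:
  assumes "finite D" "D \<subseteq> {0..}" "0 \<le> l"
  shows "symarr D l \<subseteq> {0..Max D + l}"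
proof
  fix x assume "x \<in> symarr D l"
  then consider "x \<in> D" | "Max D + l - x \<in> D"
    by (auto simp: symarr_def mem_shift_iff mem_reflect_iff algebra_simps)
  then show "x \<in> {0..Max D + l}"
  proof cases
    case 1
    then have "0 \<le> x" "x \<le> Max D" using assms(2) Max_ge[OF assms(1)] by auto
    with assms(3) show ?thesis by simp
  next
    case 2
    then have "0 \<le> Max D + l - x" "Max D + l - x \<le> Max D" using assms(2) Max_ge[OF assms(1)] by auto
    with assms(3) show ?thesis by simp
  qed
qed

lemma Max_symarr:
  assumes "finite D" "0 \<in> D" "D \<subseteq> {0..}" "0 \<le> l"
  shows "Max (symarr D l) = Max D + l"
proof (rule Max_eqI)
  show "finite (symarr D l)" using assms(1) by (rule finite_symarr)
  show "y \<le> Max D + l" if "y \<in> symarr D l" for y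
    using symarr_subset_atLeastAtMost[OF assms(1,3,4)] that by auto
  show "Max D + l \<in> symarr D l"
    using assms(2) by (simp add: symarr_def mem_shift_iff mem_reflect_iff)
qed

lemma diffset_self_eq_atLeastAtMost:
  assumes "A \<subseteq> {0..m}" and cover: "\<And>x. 0 \<le> x \<Longrightarrow> x \<le> m \<Longrightarrow> \<exists>a\<in>A. \<exists>b\<in>A. x = a - b"
  shows "diffset A A = {-m..m}"
proof
  show "diffset A A \<subseteq> {-m..m}"
  proof
    fix x assume "x \<in> diffset A A"
    then obtain a b where "a \<in> A" "b \<in> A" "x = a - b" by (auto simp: diffset_def)
    moreover have "a \<in> {0..m}" "b \<in> {0..m}" using \<open>a \<in> A\<close> \<open>b \<in> A\<close> assms(1) by auto
    ultimately show "x \<in> {-m..m}" by simp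
  qed
  show "{-m..m} \<subseteq> diffset A A"
  proof
    fix x assume x: "x \<in> {-m..m}"
    show "x \<in> diffset A A"
    proof (cases "0 \<le> x")
      case True
      then show ?thesis using cover[of x] x by (auto simp: diffset_def)
    next
      case False
      then obtain a b where "a \<in> A" "b \<in> A" "- x = a - b" using cover[of "- x"] x by auto
      moreover have "x = b - a" using \<open>- x = a - b\<close> by simp
      ultimately show ?thesis unfolding diffset_def by blast
    qed
  qed
qed

lemma sumset_self_eq_shift_diffset:
  assumes "reflect m A = A"
  shows "sumset A A = shift (diffset A A) m"
proof -
  have reflected: "m - b \<in> A \<longleftrightarrow> b \<in> A" for b
    using assms by (metis mem_reflect_iff)
  show ?thesis
  proof (intro set_eqI iffI)
    fix x assume "x \<in> sumset A A"
    then obtain a b where "a \<in> A" "b \<in> A" "x = a + b" by (auto simp: sumset_def)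
    moreover have "x - m = a - (m - b)" using \<open>x = a + b\<close> by simp
    ultimately show "x \<in> shift (diffset A A) m"
      using reflected[of b] unfolding mem_shift_iff diffset_def by blast
  next
    fix x assume "x \<in> shift (diffset A A) m"
    then obtain a b where "a \<in> A" "b \<in> A" "x - m = a - b" by (auto simp: mem_shift_iff diffset_def)
    moreover have "x = a + (m - b)" using \<open>x - m = a - b\<close> by simp
    ultimately show "x \<in> sumset A A"
      using reflected[of b] unfolding sumset_def by blast
  qed
qed

lemma mem_D1_iff: "x \<in> D1 N1 \<longleftrightarrow> 0 \<le> x \<and> x < int N1"
  by (auto simp: D1_def)

lemma mem_D2_iff: "x \<in> D2 N1 N2 \<longleftrightarrow> (\<exists>k. 0 \<le> k \<and> k < int N2 \<and> x = k * (int N1 + 1))"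
  by (auto simp: D2_def)

lemma D2_eq_image: "D2 N1 N2 = (\<lambda>k. k * (int N1 + 1)) ` {0..int N2 - 1}"
  by (auto simp: D2_def)

lemma finite_D2: "finite (D2 N1 N2)"
  by (simp add: D2_eq_image)

lemma card_D2: "card (D2 N1 N2) = N2"
proof -
  have "inj_on (\<lambda>k. k * (int N1 + 1)) {0..int N2 - 1}"
    by (auto simp: inj_on_def)
  then show ?thesis by (simp add: D2_eq_image card_image)
qed

lemma finite_DNA: "finite (DNA N1 N2)"
  by (simp add: DNA_def D1_def finite_shift finite_D2)

lemma shift_D2_bounds:
  assumes "x \<in> shift (D2 N1 N2) (int N1)"
  shows "int N1 \<le> x" "x < (int N1 + 1) * int N2"
proof -
  obtain k where k: "0 \<le> k" "k < int N2" "x = int N1 + k * (int N1 + 1)"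
    using assms by (auto simp: mem_shift_iff mem_D2_iff algebra_simps)
  have "(k + 1) * (int N1 + 1) \<le> int N2 * (int N1 + 1)"
    using k by (intro mult_right_mono) auto
  with k show "int N1 \<le> x" "x < (int N1 + 1) * int N2"
    by (simp_all add: algebra_simps)
qed

lemma DNA_nonneg: "DNA N1 N2 \<subseteq> {0..}"
  by (fastforce simp: DNA_def mem_D1_iff dest: shift_D2_bounds)

lemma zero_mem_DNA: "N2 \<ge> 1 \<Longrightarrow> 0 \<in> DNA N1 N2"
  by (cases "N1 = 0") (auto simp: DNA_def mem_D1_iff mem_shift_iff mem_D2_iff)

lemma Max_DNA:
  assumes "N2 \<ge> 1"
  shows "Max (DNA N1 N2) = (int N1 + 1) * int N2 - 1"
proof (rule Max_eqI)
  show "finite (DNA N1 N2)" by (rule finite_DNA)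
  show "(int N1 + 1) * int N2 - 1 \<in> DNA N1 N2"
    using assms by (auto simp: DNA_def mem_shift_iff mem_D2_iff algebra_simps intro!: exI[of _ "int N2 - 1"])
next
  fix y assume "y \<in> DNA N1 N2"
  moreover have "int N1 + 1 \<le> (int N1 + 1) * int N2" using assms by simp
  ultimately show "y \<le> (int N1 + 1) * int N2 - 1"
    unfolding DNA_def Un_iff mem_D1_iff using shift_D2_bounds(2)[of y N1 N2] by linarith
qed

lemma reflect_D2: "reflect ((int N1 + 1) * (int N2 - 1)) (D2 N1 N2) = D2 N1 N2"
proof (rule set_eqI)
  fix x
  have "x \<in> reflect ((int N1 + 1) * (int N2 - 1)) (D2 N1 N2)
      \<longleftrightarrow> (\<exists>k. 0 \<le> k \<and> k < int N2 \<and> x = (int N2 - 1 - k) * (int N1 + 1))"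
    by (auto simp: mem_reflect_iff mem_D2_iff algebra_simps)
  also have "\<dots> \<longleftrightarrow> x \<in> D2 N1 N2"
    unfolding mem_D2_iff by (rule ex_reverse_index_iff)
  finally show "x \<in> reflect ((int N1 + 1) * (int N2 - 1)) (D2 N1 N2) \<longleftrightarrow> x \<in> D2 N1 N2" .
qed

lemma symarr_DNA:
  assumes "N2 \<ge> 1"
  shows "symarr (DNA N1 N2) (int N1) = DCNA N1 N2"
proof -
  let ?c = "(int N1 + 1) * int N2 - 1"
  have D1: "shift (reflect ?c (D1 N1)) (int N1) = shift (D1 N1) ((int N1 + 1) * int N2)"
    by (auto simp: mem_shift_iff mem_reflect_iff mem_D1_iff)
  have D2: "shift (reflect ?c (shift (D2 N1 N2) (int N1))) (int N1) = shift (D2 N1 N2) (int N1)"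
  proof (rule set_eqI)
    fix x
    have shifts: "?c - (x - int N1) - int N1 = ?c - x" "(int N1 + 1) * (int N2 - 1) - (?c - x) = x - int N1"
      by (simp_all add: algebra_simps)
    have "x \<in> shift (reflect ?c (shift (D2 N1 N2) (int N1))) (int N1) \<longleftrightarrow> ?c - x \<in> D2 N1 N2"
      by (simp only: mem_shift_iff mem_reflect_iff shifts)
    also have "\<dots> \<longleftrightarrow> ?c - x \<in> reflect ((int N1 + 1) * (int N2 - 1)) (D2 N1 N2)"
      by (simp only: reflect_D2)
    also have "\<dots> \<longleftrightarrow> x \<in> shift (D2 N1 N2) (int N1)"
      by (simp only: mem_reflect_iff mem_shift_iff shifts)
    finally show "x \<in> shift (reflect ?c (shift (D2 N1 N2) (int N1))) (int N1)
        \<longleftrightarrow> x \<in> shift (D2 N1 N2) (int N1)" .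
  qed
  show ?thesis
    unfolding symarr_def Max_DNA[OF assms]
    unfolding DNA_def reflect_Un shift_Un D1 D2 DCNA_def by blast
qed

lemma Max_DCNA:
  assumes "N2 \<ge> 1"
  shows "Max (DCNA N1 N2) = Max (DNA N1 N2) + int N1"
  using Max_symarr[OF finite_DNA[of N1 N2] zero_mem_DNA[OF assms] DNA_nonneg, of "int N1"]
  by (simp add: symarr_DNA[OF assms])

lemma card_DCNA:
  assumes "N2 \<ge> 1"
  shows "card (DCNA N1 N2) = 2 * N1 + N2"
proof -
  let ?A = "D1 N1" and ?B = "shift (D2 N1 N2) (int N1)" and ?C = "shift (D1 N1) ((int N1 + 1) * int N2)"
  have dM: "int N1 + 1 \<le> (int N1 + 1) * int N2" using assms by simp
  have "x < (int N1 + 1) * int N2" if "x \<in> ?A \<union> ?B" for x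
    using that dM shift_D2_bounds(2)[of x N1 N2] unfolding Un_iff mem_D1_iff by (elim disjE) linarith+
  moreover have "(int N1 + 1) * int N2 \<le> x" if "x \<in> ?C" for x
    using that by (simp add: mem_shift_iff mem_D1_iff)
  ultimately have "(?A \<union> ?B) \<inter> ?C = {}" by force
  moreover have "?A \<inter> ?B = {}"
    using shift_D2_bounds(1) by (force simp: mem_D1_iff)
  ultimately have "card (DCNA N1 N2) = card ?A + card ?B + card ?C"
    by (simp add: DCNA_def card_Un_disjoint D1_def finite_shift finite_D2)
  then show ?thesis by (simp add: card_shift card_D2 D1_def)
qed

text \<open>Every \<open>x < (N\<^sub>1+1)N\<^sub>2\<close>, written as \<open>k(N\<^sub>1+1) + r\<close> with \<open>0 \<le> r \<le> N\<^sub>1\<close>, is the difference of the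
  element \<open>N\<^sub>1 + k(N\<^sub>1+1)\<close> and \<open>N\<^sub>1 - r\<close>; larger \<open>x\<close> lie in the last block and are \<open>x - 0\<close>.\<close>

lemma DCNA_differences:
  assumes "N2 \<ge> 1" "0 \<le> x" "x \<le> Max (DCNA N1 N2)"
  shows "\<exists>a\<in>DCNA N1 N2. \<exists>b\<in>DCNA N1 N2. x = a - b"
proof (cases "x < (int N1 + 1) * int N2")
  case True
  define k where "k = x div (int N1 + 1)"
  define r where "r = x mod (int N1 + 1)"
  have x: "x = k * (int N1 + 1) + r"
    using div_mult_mod_eq[of x "int N1 + 1"] by (simp add: k_def r_def)
  have r: "0 \<le> r" "r \<le> int N1"
    using pos_mod_bound[of "int N1 + 1" x] by (simp_all add: r_def)
  have "k * (int N1 + 1) < int N2 * (int N1 + 1)"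
    using True x r mult.commute[of "int N1 + 1" "int N2"] by linarith
  then have "k < int N2" by (rule mult_right_less_imp_less) simp
  moreover have "0 \<le> k" using assms(2) by (simp add: k_def pos_imp_zdiv_nonneg_iff)
  ultimately have "int N1 + k * (int N1 + 1) \<in> DCNA N1 N2"
    by (auto simp: DCNA_def mem_shift_iff mem_D2_iff)
  moreover have "int N1 - r \<in> DCNA N1 N2"
  proof (cases "r = 0")
    case True
    then show ?thesis using assms(1) by (auto simp: DCNA_def mem_shift_iff mem_D2_iff)
  next
    case False
    then show ?thesis using r by (auto simp: DCNA_def mem_D1_iff)
  qed
  moreover have "x = (int N1 + k * (int N1 + 1)) - (int N1 - r)" using x by simp
  ultimately show ?thesis by blast
next
  case False
  with assms have "x \<in> shift (D1 N1) ((int N1 + 1) * int N2)"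
    by (simp add: Max_DCNA Max_DNA mem_shift_iff mem_D1_iff)
  moreover have "x = x - 0" by simp
  ultimately show ?thesis
    using zero_mem_DNA[OF assms(1)] unfolding DCNA_def DNA_def by blast
qed

theorem mainTheorem4:
  fixes N1 N2 :: nat
  assumes "N2 \<ge> 1"
  shows "symarr (DNA N1 N2) (int N1) = DCNA N1 N2
    \<and> card (DCNA N1 N2) = 2 * N1 + N2
    \<and> Max (DCNA N1 N2) = (int N1 + 1) * int N2 + int N1 - 1
    \<and> sumset (DCNA N1 N2) (DCNA N1 N2) = {0 .. 2 * Max (DCNA N1 N2)}
    \<and> diffset (DCNA N1 N2) (DCNA N1 N2) = {- Max (DCNA N1 N2) .. Max (DCNA N1 N2)}"
proof (intro conjI)
  let ?D = "DCNA N1 N2" and ?m = "Max (DCNA N1 N2)"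
  have sym: "symarr (DNA N1 N2) (int N1) = ?D" by (rule symarr_DNA[OF assms])
  have bounded: "?D \<subseteq> {0..?m}"
    using symarr_subset_atLeastAtMost[OF finite_DNA[of N1 N2] DNA_nonneg, of "int N1"]
    by (simp add: sym Max_DCNA[OF assms])
  have diff: "diffset ?D ?D = {-?m..?m}"
    using bounded DCNA_differences[OF assms] by (rule diffset_self_eq_atLeastAtMost)
  have "reflect ?m ?D = ?D"
    using reflect_symarr[of "DNA N1 N2" "int N1"] by (simp add: sym Max_DCNA[OF assms])
  then have "sumset ?D ?D = shift {-?m..?m} ?m"
    by (simp add: sumset_self_eq_shift_diffset diff)
  then show "sumset ?D ?D = {0..2 * ?m}"
    by (simp add: shift_atLeastAtMost)
  show "diffset ?D ?D = {-?m..?m}" by (fact diff)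
  show "symarr (DNA N1 N2) (int N1) = ?D" by (fact sym)
  show "card ?D = 2 * N1 + N2" by (rule card_DCNA[OF assms])
  show "?m = (int N1 + 1) * int N2 + int N1 - 1"
    by (simp add: Max_DCNA[OF assms] Max_DNA[OF assms])
qed

end
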